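(* Let $f,g_1,g_2\in L^2(\mathbb{R}^2\times\mathbb{R})$ with $\|f\|_{L^2}=\|g_1\|_{L^2}=\|g_2\|_{L^2}=1$ and $\operatorname{supp}f\subset\mathfrak{P}_N\cap\mathfrak{W}^\pm_L$, $\operatorname{supp}g_k\subset\mathfrak{P}_{N_k}\cap\mathfrak{S}_{L_k}$ ($k=1,2$), and assume $N\lesssim1$. Then $$\Big|\int f(\zeta_1-\zeta_2)g_1(\zeta_1)g_2(\zeta_2)\,d\zeta_1d\zeta_2\Big|\lesssim L^{1/3}L_1^{1/3}L_2^{1/3}.$$
   Context: Points are $\zeta=(\xi,\tau)\in\mathbb{R}^2\times\mathbb{R}$. All of $N,N_1,N_2,L,L_1,L_2$ are dyadic numbers $2^n$, $n\ge0$. $\mathfrak{P}_1=\{|\xi|\le2\}$, $\mathfrak{P}_N=\{N/2\le|\xi|\le2N\}$ ($N\ge2$); $\mathfrak{S}_1=\{|\tau+|\xi|^2|\le2\}$, $\mathfrak{S}_L=\{L/2\le|\tau+|\xi|^2|\le2L\}$; $\mathfrak{W}^\pm_1=\{|\tau\pm|\xi||\le2\}$, $\mathfrak{W}^\pm_L=\{L/2\le|\tau\pm|\xi||\le2L\}$ ($L\ge2$). $A\lesssim B$ means $A\le cB$ with an absolute constant $c$. *)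

theory Defs
  imports "HOL-Analysis.Analysis"
begin

text \<open>Points \<zeta> = (\<xi>, \<tau>) with \<xi> \<in> R^2 (encoded as real \<times> real, Euclidean norm) and \<tau> \<in> R.\<close>
type_synonym pt = "(real \<times> real) \<times> real"

definition dyadic :: "real \<Rightarrow> bool" where
  "dyadic N \<longleftrightarrow> (\<exists>n::nat. N = 2 ^ n)"

definition Pset :: "real \<Rightarrow> pt set" where
  "Pset N = (if N = 1 then {z. norm (fst z) \<le> 2}
             else {z. N / 2 \<le> norm (fst z) \<and> norm (fst z) \<le> 2 * N})"

definition Sset :: "real \<Rightarrow> pt set" where
  "Sset L = (if L = 1 then {z. \<bar>snd z + (norm (fst z))\<^sup>2\<bar> \<le> 2}
             else {z. L / 2 \<le> \<bar>snd z + (norm (fst z))\<^sup>2\<bar> \<and> \<bar>snd z + (norm (fst z))\<^sup>2\<bar> \<le> 2 * L})"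

text \<open>Wset s L with s \<in> {1, -1} is W^{\<plusminus>}_L: the condition on \<tau> + s |\<xi>|.\<close>
definition Wset :: "real \<Rightarrow> real \<Rightarrow> pt set" where
  "Wset s L = (if L = 1 then {z. \<bar>snd z + s * norm (fst z)\<bar> \<le> 2}
             else {z. L / 2 \<le> \<bar>snd z + s * norm (fst z)\<bar> \<and> \<bar>snd z + s * norm (fst z)\<bar> \<le> 2 * L})"

definition L2_unit :: "(pt \<Rightarrow> complex) \<Rightarrow> bool" where
  "L2_unit f \<longleftrightarrow> f \<in> borel_measurable lborel
      \<and> integrable lborel (\<lambda>z. (norm (f z))\<^sup>2)
      \<and> (\<integral>z. (norm (f z))\<^sup>2 \<partial>lborel) = 1"

end

theory Submission
  imports Defs
begin

text \<open>By Cauchy--Schwarz, in the form of weighted AM--GM, the trilinear form is bounded by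
  the square root of the largest measure of a fibre
  \<open>{\<zeta>\<^sub>2 \<in> supp g\<^sub>2. \<zeta>\<^sub>1 - \<zeta>\<^sub>2 \<in> supp f}\<close>; the other two factors are controlled by
  \<open>\<parallel>g\<^sub>1\<parallel>\<^sub>2 = 1\<close> and, after a translation, by \<open>\<parallel>f\<parallel>\<^sub>2 = \<parallel>g\<^sub>2\<parallel>\<^sub>2 = 1\<close>.
  Since \<open>|\<xi>| \<le> 2N \<le> 2c\<^sub>0\<close> on the support of \<open>f\<close>, such a fibre lies over a disc of bounded
  radius, and over each \<open>\<xi>\<close> its \<open>\<tau>\<close>-section lies both in an interval of length \<open>O(L)\<close>
  (cone condition) and in one of length \<open>O(L\<^sub>2)\<close> (paraboloid condition). The fibres thus
  have measure \<open>O(min L L\<^sub>2)\<close>, and \<open>\<surd>(min L L\<^sub>2) \<le> L\<^sup>1\<^sup>/\<^sup>3 L\<^sub>1\<^sup>1\<^sup>/\<^sup>3 L\<^sub>2\<^sup>1\<^sup>/\<^sup>3\<close> as all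
  modulations are at least 1.\<close>

lemma nn_integral_lborel_translate:
  fixes h :: "'a::euclidean_space \<Rightarrow> ennreal"
  assumes [measurable]: "h \<in> borel_measurable borel"
  shows "(\<integral>\<^sup>+a. h (a - b) \<partial>lborel) = (\<integral>\<^sup>+a. h a \<partial>lborel)"
proof -
  have "(\<integral>\<^sup>+a. h a \<partial>lborel) = (\<integral>\<^sup>+a. h a \<partial>distr lborel borel ((+) (-b)))"
    by (simp add: lborel_distr_plus)
  also have "\<dots> = (\<integral>\<^sup>+a. h (-b + a) \<partial>lborel)"
    by (rule nn_integral_distr) auto
  finally show ?thesis by simp
qed

lemma nn_integral_convolution:
  fixes F G :: "'a::euclidean_space \<Rightarrow> ennreal"
  assumes [measurable]: "F \<in> borel_measurable borel" "G \<in> borel_measurable borel"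
  shows "(\<integral>\<^sup>+p. F (fst p - snd p) * G (snd p) \<partial>(lborel \<Otimes>\<^sub>M lborel))
           = (\<integral>\<^sup>+a. F a \<partial>lborel) * (\<integral>\<^sup>+b. G b \<partial>lborel)"
proof -
  have "(\<integral>\<^sup>+p. F (fst p - snd p) * G (snd p) \<partial>(lborel \<Otimes>\<^sub>M lborel))
      = (\<integral>\<^sup>+b. \<integral>\<^sup>+a. F (a - b) * G b \<partial>lborel \<partial>lborel)"
    using lborel_pair.nn_integral_snd[of "\<lambda>p. F (fst p - snd p) * G (snd p)"] by simp
  also have "\<dots> = (\<integral>\<^sup>+b. (\<integral>\<^sup>+a. F a \<partial>lborel) * G b \<partial>lborel)"
    by (simp add: nn_integral_multc nn_integral_lborel_translate)
  also have "\<dots> = (\<integral>\<^sup>+a. F a \<partial>lborel) * (\<integral>\<^sup>+b. G b \<partial>lborel)"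
    by (simp add: nn_integral_cmult)
  finally show ?thesis .
qed

lemma (in pair_sigma_finite) nn_integral_indicator_le_fibre_bound:
  fixes G :: "'a \<Rightarrow> ennreal"
  assumes [measurable]: "G \<in> borel_measurable M1" "E \<in> sets (M1 \<Otimes>\<^sub>M M2)"
    and fibre: "\<And>a. a \<in> space M1 \<Longrightarrow> emeasure M2 (Pair a -` E) \<le> K"
  shows "(\<integral>\<^sup>+p. G (fst p) * indicator E p \<partial>(M1 \<Otimes>\<^sub>M M2)) \<le> (\<integral>\<^sup>+a. G a \<partial>M1) * K"
proof -
  have "(\<integral>\<^sup>+p. G (fst p) * indicator E p \<partial>(M1 \<Otimes>\<^sub>M M2))
      = (\<integral>\<^sup>+a. \<integral>\<^sup>+b. G a * indicator (Pair a -` E) b \<partial>M2 \<partial>M1)"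
    by (rule M2.nn_integral_fst[symmetric, THEN trans]) (auto intro!: nn_integral_cong simp: indicator_def)
  also have "\<dots> = (\<integral>\<^sup>+a. G a * emeasure M2 (Pair a -` E) \<partial>M1)"
    by (intro nn_integral_cong nn_integral_cmult_indicator) (auto intro: sets_Pair1)
  also have "\<dots> \<le> (\<integral>\<^sup>+a. G a * K \<partial>M1)"
    by (intro nn_integral_mono mult_left_mono fibre) auto
  also have "\<dots> = (\<integral>\<^sup>+a. G a \<partial>M1) * K"
    by (rule nn_integral_multc) measurable
  finally show ?thesis .
qed

lemma mult_le_weighted_sum_squares:
  fixes x y l :: real
  assumes "l > 0"
  shows "x * y \<le> l/2 * x\<^sup>2 + 1/(2*l) * y\<^sup>2"
proof -
  have "0 \<le> (l*x - y)\<^sup>2 / (2*l)" using assms by simp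
  also have "\<dots> = l/2 * x\<^sup>2 + 1/(2*l) * y\<^sup>2 - x*y"
    using assms by (simp add: field_simps power2_eq_square)
  finally show ?thesis by simp
qed

lemma ennreal_mult_le_weighted_sum_squares:
  fixes x y l :: real
  assumes "x \<ge> 0" "y \<ge> 0" "l > 0"
  shows "ennreal (x * y) \<le> ennreal (l/2) * ennreal (x\<^sup>2) + ennreal (1/(2*l)) * ennreal (y\<^sup>2)"
proof -
  have "ennreal (x * y) \<le> ennreal (l/2 * x\<^sup>2 + 1/(2*l) * y\<^sup>2)"
    using mult_le_weighted_sum_squares[OF \<open>l > 0\<close>] by (rule ennreal_leI)
  also have "\<dots> = ennreal (l/2) * ennreal (x\<^sup>2) + ennreal (1/(2*l)) * ennreal (y\<^sup>2)"
    using assms by (simp add: ennreal_plus ennreal_mult del: times_divide_eq_left divide_divide_eq_left)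
  finally show ?thesis .
qed

lemma sets_convolution_support:
  fixes S S2 :: "'a::euclidean_space set"
  assumes [measurable]: "S \<in> sets borel" "S2 \<in> sets borel"
  shows "{p :: 'a \<times> 'a. snd p \<in> S2 \<and> fst p - snd p \<in> S} \<in> sets (lborel \<Otimes>\<^sub>M lborel)"
proof -
  have [measurable]: "(\<lambda>p::'a \<times> 'a. fst p - snd p) \<in> borel_measurable (borel \<Otimes>\<^sub>M borel)"
    by measurable
  have "Measurable.pred (lborel \<Otimes>\<^sub>M lborel) (\<lambda>p::'a \<times> 'a. snd p \<in> S2 \<and> fst p - snd p \<in> S)"
    by measurable
  then show ?thesis by (simp add: pred_def space_pair_measure)
qed

lemma convolution_form_le_weighted_sum:
  fixes F G1 G2 :: "'a::euclidean_space \<Rightarrow> real" and l :: real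
  assumes [measurable]: "F \<in> borel_measurable borel" "G1 \<in> borel_measurable borel"
      "G2 \<in> borel_measurable borel" "E \<in> sets (lborel \<Otimes>\<^sub>M lborel)"
    and nonneg: "\<And>z. F z \<ge> 0" "\<And>z. G1 z \<ge> 0" "\<And>z. G2 z \<ge> 0"
    and supp: "\<And>a b. F (a - b) \<noteq> 0 \<Longrightarrow> G2 b \<noteq> 0 \<Longrightarrow> (a, b) \<in> E"
    and "l > 0"
  shows "(\<integral>\<^sup>+p. ennreal (F (fst p - snd p) * G1 (fst p) * G2 (snd p)) \<partial>(lborel \<Otimes>\<^sub>M lborel))
      \<le> ennreal (l/2) * (\<integral>\<^sup>+p. ennreal ((G1 (fst p))\<^sup>2) * indicator E p \<partial>(lborel \<Otimes>\<^sub>M lborel))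
        + ennreal (1/(2*l)) * (\<integral>\<^sup>+p. ennreal ((F (fst p - snd p))\<^sup>2) * ennreal ((G2 (snd p))\<^sup>2)
            \<partial>(lborel \<Otimes>\<^sub>M lborel))"
proof -
  have pointwise: "ennreal (F (fst p - snd p) * G1 (fst p) * G2 (snd p))
      \<le> ennreal (l/2) * (ennreal ((G1 (fst p))\<^sup>2) * indicator E p)
        + ennreal (1/(2*l)) * (ennreal ((F (fst p - snd p))\<^sup>2) * ennreal ((G2 (snd p))\<^sup>2))"
    for p
  proof (cases "p \<in> E")
    case True
    then show ?thesis
      using ennreal_mult_le_weighted_sum_squares[OF _ _ \<open>l > 0\<close>,
          of "G1 (fst p)" "F (fst p - snd p) * G2 (snd p)"] nonneg
      by (simp add: mult_ac power_mult_distrib ennreal_mult)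
  next
    case False
    then have "F (fst p - snd p) = 0 \<or> G2 (snd p) = 0"
      using supp[of "fst p" "snd p"] by auto
    then show ?thesis by auto
  qed
  have "(\<integral>\<^sup>+p. ennreal (F (fst p - snd p) * G1 (fst p) * G2 (snd p)) \<partial>(lborel \<Otimes>\<^sub>M lborel))
      \<le> (\<integral>\<^sup>+p. ennreal (l/2) * (ennreal ((G1 (fst p))\<^sup>2) * indicator E p)
            + ennreal (1/(2*l)) * (ennreal ((F (fst p - snd p))\<^sup>2) * ennreal ((G2 (snd p))\<^sup>2))
          \<partial>(lborel \<Otimes>\<^sub>M lborel))"
    using pointwise by (rule nn_integral_mono)
  then show ?thesis
    by (simp add: nn_integral_add nn_integral_cmult)
qed

lemma convolution_form_le_sqrt_fibre_measure:
  fixes F G1 G2 :: "'a::euclidean_space \<Rightarrow> real" and K :: real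
  assumes [measurable]: "F \<in> borel_measurable borel" "G1 \<in> borel_measurable borel"
      "G2 \<in> borel_measurable borel" "S \<in> sets borel" "S2 \<in> sets borel"
    and nonneg: "\<And>z. F z \<ge> 0" "\<And>z. G1 z \<ge> 0" "\<And>z. G2 z \<ge> 0"
    and unit: "(\<integral>\<^sup>+z. ennreal ((F z)\<^sup>2) \<partial>lborel) = 1" "(\<integral>\<^sup>+z. ennreal ((G1 z)\<^sup>2) \<partial>lborel) = 1"
      "(\<integral>\<^sup>+z. ennreal ((G2 z)\<^sup>2) \<partial>lborel) = 1"
    and supp: "\<And>z. F z \<noteq> 0 \<Longrightarrow> z \<in> S" "\<And>z. G2 z \<noteq> 0 \<Longrightarrow> z \<in> S2"
    and fibre: "\<And>a. emeasure lborel {b \<in> S2. a - b \<in> S} \<le> ennreal K"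
    and "K > 0"
  shows "(\<integral>\<^sup>+p. ennreal (F (fst p - snd p) * G1 (fst p) * G2 (snd p)) \<partial>(lborel :: ('a \<times> 'a) measure))
           \<le> ennreal (sqrt K)"
proof -
  define E where "E = {p :: 'a \<times> 'a. snd p \<in> S2 \<and> fst p - snd p \<in> S}"
  have E_sets[measurable]: "E \<in> sets (lborel \<Otimes>\<^sub>M lborel)"
    unfolding E_def using assms(4,5) by (rule sets_convolution_support)
  define l where "l = 1 / sqrt K"
  have "l > 0" using \<open>K > 0\<close> by (simp add: l_def)
  have "Pair a -` E = {b \<in> S2. a - b \<in> S}" for a
    by (auto simp: E_def)
  then have "(\<integral>\<^sup>+p. ennreal ((G1 (fst p))\<^sup>2) * indicator E p \<partial>(lborel \<Otimes>\<^sub>M lborel))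
      \<le> (\<integral>\<^sup>+a. ennreal ((G1 a)\<^sup>2) \<partial>lborel) * ennreal K"
    using fibre by (intro lborel_pair.nn_integral_indicator_le_fibre_bound E_sets) auto
  then have G1_part: "(\<integral>\<^sup>+p. ennreal ((G1 (fst p))\<^sup>2) * indicator E p \<partial>(lborel \<Otimes>\<^sub>M lborel)) \<le> ennreal K"
    using unit(2) by simp
  have F_G2_part: "(\<integral>\<^sup>+p. ennreal ((F (fst p - snd p))\<^sup>2) * ennreal ((G2 (snd p))\<^sup>2)
      \<partial>(lborel \<Otimes>\<^sub>M lborel)) = 1"
    using nn_integral_convolution[of "\<lambda>a. ennreal ((F a)\<^sup>2)" "\<lambda>b. ennreal ((G2 b)\<^sup>2)"] unit
    by simp
  have "(\<integral>\<^sup>+p. ennreal (F (fst p - snd p) * G1 (fst p) * G2 (snd p)) \<partial>(lborel \<Otimes>\<^sub>M lborel))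
      \<le> ennreal (l/2) * (\<integral>\<^sup>+p. ennreal ((G1 (fst p))\<^sup>2) * indicator E p \<partial>(lborel \<Otimes>\<^sub>M lborel))
        + ennreal (1/(2*l)) * (\<integral>\<^sup>+p. ennreal ((F (fst p - snd p))\<^sup>2) * ennreal ((G2 (snd p))\<^sup>2)
            \<partial>(lborel \<Otimes>\<^sub>M lborel))"
    by (rule convolution_form_le_weighted_sum) (use E_sets nonneg supp \<open>l > 0\<close> in \<open>auto simp: E_def\<close>)
  also have "\<dots> \<le> ennreal (l/2) * ennreal K + ennreal (1/(2*l))"
    using G1_part F_G2_part by (intro add_mono mult_left_mono) auto
  also have "\<dots> = ennreal (sqrt K)"
    using \<open>K > 0\<close> by (simp add: l_def ennreal_mult'[symmetric] ennreal_plus[symmetric] field_simps)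
  finally show ?thesis
    by (simp only: lborel_prod)
qed

definition cone_slab :: "real \<Rightarrow> real \<Rightarrow> real \<Rightarrow> pt set" where
  "cone_slab s r w = {z. norm (fst z) \<le> r \<and> \<bar>snd z + s * norm (fst z)\<bar> \<le> w}"

definition paraboloid_slab :: "real \<Rightarrow> pt set" where
  "paraboloid_slab w = {z. \<bar>snd z + (norm (fst z))\<^sup>2\<bar> \<le> w}"

lemma closed_cone_slab: "closed (cone_slab s r w)"
  unfolding cone_slab_def by (intro closed_Collect_conj closed_Collect_le continuous_intros)

lemma closed_paraboloid_slab: "closed (paraboloid_slab w)"
  unfolding paraboloid_slab_def by (intro closed_Collect_le continuous_intros)

lemma emeasure_cball_le:
  fixes x :: "real \<times> real"
  assumes "r \<ge> 0"
  shows "emeasure lborel (cball x r) \<le> ennreal (4 * r\<^sup>2)"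
proof -
  define B where "B = {fst x - r .. fst x + r} \<times> {snd x - r .. snd x + r}"
  have "cball x r \<subseteq> B"
  proof
    fix y assume "y \<in> cball x r"
    then have "\<bar>fst x - fst y\<bar> \<le> r" "\<bar>snd x - snd y\<bar> \<le> r"
      by (metis dist_fst_le dist_real_def mem_cball order_trans,
          metis dist_snd_le dist_real_def mem_cball order_trans)
    then show "y \<in> B" by (cases y) (auto simp: B_def)
  qed
  then have "emeasure lborel (cball x r) \<le> emeasure lborel B"
    by (rule emeasure_mono) (simp add: B_def borel_closed closed_Times)
  also have "\<dots> = ennreal (2*r) * ennreal (2*r)"
    using assms by (simp add: B_def lborel_prod[symmetric] lborel.emeasure_pair_measure_Times)
  also have "\<dots> = ennreal (4 * r\<^sup>2)"
    using assms by (simp add: ennreal_mult[symmetric] power2_eq_square)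
  finally show ?thesis .
qed

lemma emeasure_paraboloid_cone_fibre_le:
  assumes "r \<ge> 0" "w \<ge> 0" "w2 \<ge> 0"
  shows "emeasure lborel {b \<in> paraboloid_slab w2. a - b \<in> cone_slab s r w} \<le> ennreal (8 * r\<^sup>2 * min w w2)"
proof -
  define X where "X = {b \<in> paraboloid_slab w2. a - b \<in> cone_slab s r w}"
  have X_eq: "X = {b. \<bar>snd b + (norm (fst b))\<^sup>2\<bar> \<le> w2 \<and> norm (fst a - fst b) \<le> r
      \<and> \<bar>snd a - snd b + s * norm (fst a - fst b)\<bar> \<le> w}"
    by (auto simp: X_def paraboloid_slab_def cone_slab_def)
  have "closed X" unfolding X_eq
    by (intro closed_Collect_conj closed_Collect_le continuous_intros)
  then have X_sets: "X \<in> sets (lborel \<Otimes>\<^sub>M lborel)"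
    by (simp only: lborel_prod sets_lborel borel_closed)
  have fibre: "emeasure lborel (Pair \<xi> -` X) \<le> ennreal (2 * min w w2) * indicator (cball (fst a) r) \<xi>"
    for \<xi> :: "real \<times> real"
  proof (cases "\<xi> \<in> cball (fst a) r")
    case True
    have "Pair \<xi> -` X \<subseteq> {-(norm \<xi>)\<^sup>2 - w2 .. -(norm \<xi>)\<^sup>2 + w2}"
      by (auto simp: X_eq)
    from emeasure_mono[OF this, of lborel]
    have "emeasure lborel (Pair \<xi> -` X) \<le> ennreal (2 * w2)"
      using assms by simp
    moreover have "Pair \<xi> -` X \<subseteq> {snd a + s * norm (fst a - \<xi>) - w .. snd a + s * norm (fst a - \<xi>) + w}"
      by (auto simp: X_eq)
    from emeasure_mono[OF this, of lborel]
    have "emeasure lborel (Pair \<xi> -` X) \<le> ennreal (2 * w)"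
      using assms by simp
    ultimately show ?thesis
      using True by (cases "w \<le> w2") (auto simp: min_def)
  next
    case False
    then have "Pair \<xi> -` X = {}" by (auto simp: X_eq dist_norm)
    then show ?thesis by simp
  qed
  have "emeasure lborel X = (\<integral>\<^sup>+\<xi>. emeasure lborel (Pair \<xi> -` X) \<partial>lborel)"
    using lborel.emeasure_pair_measure_alt[OF X_sets] by (simp add: lborel_prod)
  also have "\<dots> \<le> (\<integral>\<^sup>+\<xi>. ennreal (2 * min w w2) * indicator (cball (fst a) r) \<xi> \<partial>lborel)"
    using fibre by (rule nn_integral_mono)
  also have "\<dots> = ennreal (2 * min w w2) * emeasure lborel (cball (fst a) r)"
    by (rule nn_integral_cmult_indicator) simp
  also have "\<dots> \<le> ennreal (2 * min w w2) * ennreal (4 * r\<^sup>2)"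
    using emeasure_cball_le assms by (intro mult_left_mono) auto
  also have "\<dots> = ennreal (8 * r\<^sup>2 * min w w2)"
    using assms by (simp add: ennreal_mult[symmetric])
  finally show ?thesis unfolding X_def .
qed

lemma Pset_Int_Wset_subset_cone_slab:
  assumes "N \<le> c"
  shows "Pset N \<inter> Wset s L \<subseteq> cone_slab s (2*c) (2*L)"
  using assms by (auto simp: Pset_def Wset_def cone_slab_def split: if_splits)

lemma Sset_subset_paraboloid_slab: "Sset L \<subseteq> paraboloid_slab (2*L)"
  by (auto simp: Sset_def paraboloid_slab_def split: if_splits)

lemma dyadic_ge_one: "dyadic N \<Longrightarrow> N \<ge> 1"
  unfolding dyadic_def by auto

lemma L2_unit_norm:
  assumes "L2_unit f"
  shows "(\<lambda>z. norm (f z)) \<in> borel_measurable borel"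
    and "(\<integral>\<^sup>+z. ennreal ((norm (f z))\<^sup>2) \<partial>lborel) = 1"
proof -
  have [measurable]: "f \<in> borel_measurable borel"
    using assms by (simp add: L2_unit_def)
  show "(\<lambda>z. norm (f z)) \<in> borel_measurable borel"
    by measurable
  have "(\<integral>\<^sup>+z. ennreal ((norm (f z))\<^sup>2) \<partial>lborel) = ennreal (\<integral>z. (norm (f z))\<^sup>2 \<partial>lborel)"
    using assms unfolding L2_unit_def by (intro nn_integral_eq_integral) auto
  then show "(\<integral>\<^sup>+z. ennreal ((norm (f z))\<^sup>2) \<partial>lborel) = 1"
    using assms by (simp add: L2_unit_def)
qed

lemma sqrt_min_le_cube_roots:
  fixes L L1 L2 :: real
  assumes "L \<ge> 1" "L1 \<ge> 1" "L2 \<ge> 1"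
  shows "sqrt (min L L2) \<le> L powr (1/3) * L1 powr (1/3) * L2 powr (1/3)"
proof -
  define m where "m = min L L2"
  have "m \<ge> 1" "m \<le> L" "m \<le> L2" using assms by (auto simp: m_def)
  have "sqrt m = m powr (1/4) * m powr (1/4)"
    using \<open>m \<ge> 1\<close> by (simp add: powr_half_sqrt[symmetric] powr_add[symmetric])
  also have "\<dots> \<le> L powr (1/4) * L2 powr (1/4)"
    using \<open>m \<ge> 1\<close> \<open>m \<le> L\<close> \<open>m \<le> L2\<close> by (intro mult_mono powr_mono2) auto
  also have "\<dots> \<le> L powr (1/3) * L2 powr (1/3)"
    using assms by (intro mult_mono powr_mono) auto
  also have "\<dots> \<le> L powr (1/3) * L1 powr (1/3) * L2 powr (1/3)"
    using assms by (simp add: mult_le_cancel_left1 mult_le_cancel_right1 ge_one_powr_ge_zero)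
  finally show ?thesis unfolding m_def .
qed

lemma convolution_form_cone_paraboloid_le:
  fixes f g1 g2 :: "pt \<Rightarrow> complex"
  assumes "c > 0" "N \<le> c" "L \<ge> 1" "L1 \<ge> 1" "L2 \<ge> 1"
    and unit: "L2_unit f" "L2_unit g1" "L2_unit g2"
    and supp_f: "\<And>z. f z \<noteq> 0 \<Longrightarrow> z \<in> Pset N \<inter> Wset s L"
    and supp_g2: "\<And>z. g2 z \<noteq> 0 \<Longrightarrow> z \<in> Sset L2"
  shows "norm (\<integral>p. f (fst p - snd p) * g1 (fst p) * g2 (snd p) \<partial>(lborel :: (pt \<times> pt) measure))
           \<le> 8 * c * L powr (1/3) * L1 powr (1/3) * L2 powr (1/3)"
proof -
  define K where "K = 8 * (2*c)\<^sup>2 * min (2*L) (2*L2)"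
  have "K > 0" using assms by (simp add: K_def)
  have "(\<integral>\<^sup>+p. ennreal (norm (f (fst p - snd p)) * norm (g1 (fst p)) * norm (g2 (snd p)))
          \<partial>(lborel :: (pt \<times> pt) measure)) \<le> ennreal (sqrt K)"
  proof (rule convolution_form_le_sqrt_fibre_measure[OF L2_unit_norm(1)[OF unit(1)]
        L2_unit_norm(1)[OF unit(2)] L2_unit_norm(1)[OF unit(3)] _ _ _ _ _
        L2_unit_norm(2)[OF unit(1)] L2_unit_norm(2)[OF unit(2)] L2_unit_norm(2)[OF unit(3)]])
    show "cone_slab s (2*c) (2*L) \<in> sets borel" "paraboloid_slab (2*L2) \<in> sets borel"
      by (simp_all add: borel_closed closed_cone_slab closed_paraboloid_slab)
    show "norm (f z) \<noteq> 0 \<Longrightarrow> z \<in> cone_slab s (2*c) (2*L)" for z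
      using supp_f[of z] Pset_Int_Wset_subset_cone_slab[OF \<open>N \<le> c\<close>, of s L] by auto
    show "norm (g2 z) \<noteq> 0 \<Longrightarrow> z \<in> paraboloid_slab (2*L2)" for z
      using supp_g2[of z] Sset_subset_paraboloid_slab[of L2] by auto
    show "emeasure lborel {b \<in> paraboloid_slab (2*L2). a - b \<in> cone_slab s (2*c) (2*L)} \<le> ennreal K" for a
      unfolding K_def using assms by (intro emeasure_paraboloid_cone_fibre_le) auto
  qed (use \<open>K > 0\<close> in auto)
  then have "norm (\<integral>p. f (fst p - snd p) * g1 (fst p) * g2 (snd p) \<partial>(lborel :: (pt \<times> pt) measure))
      \<le> sqrt K"
    using \<open>K > 0\<close>
    by (intro order_trans[OF integral_norm_bound] integral_real_bounded) (simp_all add: norm_mult)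
  also have "sqrt K = sqrt ((8*c)\<^sup>2 * min L L2)"
    by (simp add: K_def min_def power2_eq_square)
  also have "\<dots> = 8 * c * sqrt (min L L2)"
    using \<open>c > 0\<close> by (simp add: real_sqrt_mult)
  also have "\<dots> \<le> 8 * c * (L powr (1/3) * L1 powr (1/3) * L2 powr (1/3))"
    using assms by (intro mult_left_mono sqrt_min_le_cube_roots) auto
  finally show ?thesis by (simp add: mult.assoc)
qed

theorem proposition4p9:
  "\<forall>c0>0. \<exists>C>0. \<forall>(s::real) N N1 N2 L L1 L2 (f::pt \<Rightarrow> complex) g1 g2.
     s \<in> {1, -1} \<and> dyadic N \<and> dyadic N1 \<and> dyadic N2 \<and> dyadic L \<and> dyadic L1 \<and> dyadic L2
     \<and> N \<le> c0
     \<and> L2_unit f \<and> L2_unit g1 \<and> L2_unit g2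
     \<and> (\<forall>z. f z \<noteq> 0 \<longrightarrow> z \<in> Pset N \<inter> Wset s L)
     \<and> (\<forall>z. g1 z \<noteq> 0 \<longrightarrow> z \<in> Pset N1 \<inter> Sset L1)
     \<and> (\<forall>z. g2 z \<noteq> 0 \<longrightarrow> z \<in> Pset N2 \<inter> Sset L2)
     \<longrightarrow> norm (\<integral>p. f (fst p - snd p) * g1 (fst p) * g2 (snd p) \<partial>(lborel :: (pt \<times> pt) measure))
         \<le> C * L powr (1/3) * L1 powr (1/3) * L2 powr (1/3)"
  apply (intro allI impI)
  subgoal for c0
    by (intro exI[of _ "8 * c0"] conjI allI impI)
       (auto intro!: convolution_form_cone_paraboloid_le dyadic_ge_one)
  done

end
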